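(* In $X=(\mathbb{R}^2,\|\cdot\|_\infty)$ let $A=\{(x,y):x>0,\ y\ge 1/x\}$ and $B=\{(x,y):x>-1,\ y\le \frac{1}{x+1}-1\}$. Then $\mathrm{dist}(A,B)=1$, the ordered pair $(A,B)$ has the $BUC$ property, and $(A,B)$ does not have the $UC$ property.
   Context: $\|(x,y)\|_\infty=\max\{|x|,|y|\}$; $\mathrm{dist}(A,B)=\inf\{\|a-b\|_\infty:a\in A,b\in B\}$. The ordered pair $(A,B)$ has the $UC$ property if for all sequences $\{x_n\},\{z_n\}\subset A$, $\{y_n\}\subset B$ with $\lim_n\|x_n-y_n\|=\lim_n\|z_n-y_n\|=\mathrm{dist}(A,B)$ one has $\lim_n\|x_n-z_n\|=0$. It has the bounded $UC$ property ($BUC$) if the same implication holds whenever in addition $\{x_n\}$ and $\{z_n\}$ are bounded. *)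

theory Defs
  imports "HOL-Analysis.Analysis"
begin

definition norm_inf :: "real \<times> real \<Rightarrow> real" where
  "norm_inf p = max \<bar>fst p\<bar> \<bar>snd p\<bar>"

definition dist_inf :: "real \<times> real \<Rightarrow> real \<times> real \<Rightarrow> real" where
  "dist_inf p q = norm_inf (fst p - fst q, snd p - snd q)"

definition set_dist_inf :: "(real \<times> real) set \<Rightarrow> (real \<times> real) set \<Rightarrow> real" where
  "set_dist_inf A B = Inf {dist_inf a b | a b. a \<in> A \<and> b \<in> B}"

definition UC_prop :: "(real \<times> real) set \<Rightarrow> (real \<times> real) set \<Rightarrow> bool" where
  "UC_prop A B \<longleftrightarrow>
     (\<forall>x z y. (\<forall>n. x n \<in> A) \<and> (\<forall>n. z n \<in> A) \<and> (\<forall>n. y n \<in> B) \<and>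
        (\<lambda>n. dist_inf (x n) (y n)) \<longlonglongrightarrow> set_dist_inf A B \<and>
        (\<lambda>n. dist_inf (z n) (y n)) \<longlonglongrightarrow> set_dist_inf A B
        \<longrightarrow> (\<lambda>n. dist_inf (x n) (z n)) \<longlonglongrightarrow> 0)"

definition bounded_seq_inf :: "(nat \<Rightarrow> real \<times> real) \<Rightarrow> bool" where
  "bounded_seq_inf x \<longleftrightarrow> (\<exists>M. \<forall>n. norm_inf (x n) \<le> M)"

definition BUC_prop :: "(real \<times> real) set \<Rightarrow> (real \<times> real) set \<Rightarrow> bool" where
  "BUC_prop A B \<longleftrightarrow>
     (\<forall>x z y. (\<forall>n. x n \<in> A) \<and> (\<forall>n. z n \<in> A) \<and> (\<forall>n. y n \<in> B) \<and>
        bounded_seq_inf x \<and> bounded_seq_inf z \<and>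
        (\<lambda>n. dist_inf (x n) (y n)) \<longlonglongrightarrow> set_dist_inf A B \<and>
        (\<lambda>n. dist_inf (z n) (y n)) \<longlonglongrightarrow> set_dist_inf A B
        \<longrightarrow> (\<lambda>n. dist_inf (x n) (z n)) \<longlonglongrightarrow> 0)"

end

theory Submission
  imports Defs
begin

text \<open>Shifting B by (1,1) turns it into the region under the hyperbola pq = 1, while A lies above
  it. If a point (a,b) of A were within distance less than 1 of a point (p-1,q-1) of B we would
  have a < p and b < q, hence 1 \<le> ab < pq \<le> 1; so the distance is 1, attained at (1,1) and (0,0).
  Conversely, if (a,b) is almost at distance 1 from (u,v) \<in> B, then a \<lesssim> u+1, b \<lesssim> v+1 and
  ab \<ge> 1 \<ge> (u+1)(v+1) force (a,b) close to (1/(v+1), 1/(u+1)), uniformly as long as (a,b) stays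
  bounded (so that both coordinates stay away from 0). Two bounded sequences in A that are almost
  nearest to the same points of B therefore merge. Without boundedness this fails: (n, 1/n) and
  (n+1, 1/(n+1)) are both almost nearest to (n, 1/(n+1) - 1), yet stay at distance 1.\<close>

definition hyperbola_above :: "(real \<times> real) set" where
  "hyperbola_above = {(x, y). x > 0 \<and> y \<ge> 1 / x}"

definition shifted_hyperbola_below :: "(real \<times> real) set" where
  "shifted_hyperbola_below = {(x, y). x > -1 \<and> y \<le> 1 / (x + 1) - 1}"

definition hyperbola_partner :: "real \<times> real \<Rightarrow> real \<times> real" where
  "hyperbola_partner p = (1 / (snd p + 1), 1 / (fst p + 1))"

lemma mem_hyperbola_above:
  "(a, b) \<in> hyperbola_above \<longleftrightarrow> a > 0 \<and> a * b \<ge> 1"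
  unfolding hyperbola_above_def by (auto simp: field_simps)

lemma mem_shifted_hyperbola_below:
  "(u, v) \<in> shifted_hyperbola_below \<longleftrightarrow> u > -1 \<and> (u + 1) * (v + 1) \<le> 1"
  unfolding shifted_hyperbola_below_def by (auto simp: field_simps)

lemma dist_inf_Pair: "dist_inf (a, b) (u, v) = max \<bar>a - u\<bar> \<bar>b - v\<bar>"
  by (simp add: dist_inf_def norm_inf_def)

lemma dist_inf_nonneg: "dist_inf p q \<ge> 0"
  by (simp add: dist_inf_def norm_inf_def)

lemma dist_inf_commute: "dist_inf p q = dist_inf q p"
  by (simp add: dist_inf_def norm_inf_def abs_minus_commute)

lemma dist_inf_triangle: "dist_inf p r \<le> dist_inf p q + dist_inf q r"
  unfolding dist_inf_def norm_inf_def by (simp add: abs_triangle_ineq4 max_def) linarith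

lemma hyperbola_gap:
  fixes a b p q :: real
  assumes "a > 0" "a * b \<ge> 1" "p > 0" "p * q \<le> 1"
  shows "max \<bar>a - (p - 1)\<bar> \<bar>b - (q - 1)\<bar> \<ge> 1"
proof (rule ccontr)
  assume "\<not> ?thesis"
  hence "a < p" "b < q" by (auto simp: abs_less_iff)
  moreover have "b > 0" using assms zero_less_mult_pos[of a b] by linarith
  ultimately have "a * b < p * q" using assms by (intro mult_strict_mono) auto
  thus False using assms by linarith
qed

lemma dist_inf_hyperbolas_ge_1:
  assumes "a \<in> hyperbola_above" "b \<in> shifted_hyperbola_below"
  shows "dist_inf a b \<ge> 1"
proof -
  obtain a1 a2 b1 b2 where ab: "a = (a1, a2)" "b = (b1, b2)" by fastforce
  with assms have "a1 > 0" "a1 * a2 \<ge> 1" "b1 + 1 > 0" "(b1 + 1) * (b2 + 1) \<le> 1"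
    by (auto simp: mem_hyperbola_above mem_shifted_hyperbola_below)
  from hyperbola_gap[OF this] show ?thesis by (simp add: ab dist_inf_Pair)
qed

lemma set_dist_inf_eqI:
  assumes "a \<in> A" "b \<in> B" "dist_inf a b = d" "\<And>a b. a \<in> A \<Longrightarrow> b \<in> B \<Longrightarrow> d \<le> dist_inf a b"
  shows "set_dist_inf A B = d"
  unfolding set_dist_inf_def
proof (rule cInf_eq_minimum)
  show "d \<in> {dist_inf a b |a b. a \<in> A \<and> b \<in> B}" using assms(1-3) by blast
next
  fix x assume "x \<in> {dist_inf a b |a b. a \<in> A \<and> b \<in> B}"
  then obtain a b where "x = dist_inf a b" "a \<in> A" "b \<in> B" by auto
  thus "d \<le> x" using assms(4) by simp
qed

lemma set_dist_inf_hyperbolas: "set_dist_inf hyperbola_above shifted_hyperbola_below = 1"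
  by (rule set_dist_inf_eqI[of "(1, 1)" _ "(0, 0)"])
     (auto simp: mem_hyperbola_above mem_shifted_hyperbola_below dist_inf_Pair
           intro: dist_inf_hyperbolas_ge_1)

text \<open>a \<le> M and ab \<ge> 1 keep b, hence q \<ge> b - \<delta>, away from 0, which makes 1/q
  Lipschitz on the relevant range.\<close>
lemma hyperbola_coordinate_estimate:
  fixes a b p q M \<delta> :: real
  assumes a: "a > 0" "b > 0" "a * b \<ge> 1" "a \<le> M" "b \<le> M"
    and pq: "p * q \<le> 1"
    and d: "a \<le> p + \<delta>" "b \<le> q + \<delta>" "0 \<le> \<delta>" "\<delta> \<le> 1 / (2 * M)"
  shows "\<bar>a - 1 / q\<bar> \<le> (4 * M\<^sup>2 + 1) * \<delta>"
proof -
  have M0: "M > 0" using a by linarith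
  have "b \<ge> 1 / a" using a by (simp add: field_simps)
  moreover have "1 / a \<ge> 1 / M" using a by (simp add: frac_le)
  moreover have "1 / M - 1 / (2 * M) = 1 / (2 * M)" using M0 by (simp add: field_simps)
  ultimately have q_ge: "q \<ge> 1 / (2 * M)" using d by linarith
  hence q0: "q > 0" using M0 by (smt (verit) divide_pos_pos)
  have "p \<le> 1 / q" using pq q0 by (simp add: field_simps mult.commute)
  hence upper: "a - 1 / q \<le> \<delta>" using d by linarith
  have "a \<ge> 1 / b" using a by (simp add: field_simps)
  moreover have "1 / b \<ge> 1 / (q + \<delta>)" using a d q0 by (simp add: frac_le)
  ultimately have a_ge: "a \<ge> 1 / (q + \<delta>)" by linarith
  have "q * q \<ge> (1 / (2 * M)) * (1 / (2 * M))" using q_ge q0 M0 by (intro mult_mono) auto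
  moreover have "q * q \<le> q * (q + \<delta>)" using q0 d by (simp add: mult_left_mono)
  moreover have "(1 / (2 * M)) * (1 / (2 * M)) = 1 / (4 * M\<^sup>2)"
    using M0 by (simp add: field_simps power2_eq_square)
  ultimately have qq: "q * (q + \<delta>) \<ge> 1 / (4 * M\<^sup>2)" by linarith
  have "1 / q - 1 / (q + \<delta>) = \<delta> / (q * (q + \<delta>))" using q0 d by (simp add: field_simps)
  also have "\<dots> \<le> \<delta> / (1 / (4 * M\<^sup>2))"
    using qq d M0 q0 by (intro divide_left_mono) (auto intro!: mult_pos_pos)
  also have "\<dots> = 4 * M\<^sup>2 * \<delta>" by simp
  finally have "1 / q - a \<le> 4 * M\<^sup>2 * \<delta>" using a_ge by linarith
  moreover have "\<delta> \<le> (4 * M\<^sup>2 + 1) * \<delta>" "4 * M\<^sup>2 * \<delta> \<le> (4 * M\<^sup>2 + 1) * \<delta>"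
    using d by (simp_all add: algebra_simps)
  ultimately show ?thesis using upper by linarith
qed

lemma dist_inf_hyperbola_partner_le:
  fixes M \<delta> :: real
  assumes "p \<in> hyperbola_above" "y \<in> shifted_hyperbola_below" "norm_inf p \<le> M"
    and "dist_inf p y < 1 + \<delta>" "0 \<le> \<delta>" "\<delta> \<le> 1 / (2 * M)"
  shows "dist_inf p (hyperbola_partner y) \<le> (4 * M\<^sup>2 + 1) * \<delta>"
proof -
  obtain a b u v where pv: "p = (a, b)" "y = (u, v)" by fastforce
  with assms have a: "a > 0" "a * b \<ge> 1" "a \<le> M" "b \<le> M"
    and uv: "(u + 1) * (v + 1) \<le> 1"
    and close: "a \<le> (u + 1) + \<delta>" "b \<le> (v + 1) + \<delta>"
    by (auto simp: mem_hyperbola_above mem_shifted_hyperbola_below norm_inf_def dist_inf_Pair)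
  have b0: "b > 0" using a zero_less_mult_pos[of a b] by linarith
  have "\<bar>a - 1 / (v + 1)\<bar> \<le> (4 * M\<^sup>2 + 1) * \<delta>"
    using hyperbola_coordinate_estimate[OF a(1) b0 a(2-4) uv close assms(5,6)] .
  moreover have "\<bar>b - 1 / (u + 1)\<bar> \<le> (4 * M\<^sup>2 + 1) * \<delta>"
    using hyperbola_coordinate_estimate[OF b0 a(1) _ a(4,3) _ close(2,1) assms(5,6)] a(2) uv
    by (simp add: mult.commute)
  ultimately show ?thesis by (simp add: pv hyperbola_partner_def dist_inf_Pair)
qed

lemma tendsto_dist_inf_hyperbola_partner:
  assumes "\<And>n. x n \<in> hyperbola_above" "\<And>n. y n \<in> shifted_hyperbola_below"
    and "bounded_seq_inf x" and "(\<lambda>n. dist_inf (x n) (y n)) \<longlonglongrightarrow> 1"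
  shows "(\<lambda>n. dist_inf (x n) (hyperbola_partner (y n))) \<longlonglongrightarrow> 0"
proof (rule order_tendstoI)
  fix \<epsilon> :: real assume "\<epsilon> > 0"
  obtain M0 where "\<And>n. norm_inf (x n) \<le> M0" using assms(3) unfolding bounded_seq_inf_def by blast
  define M where "M = max 1 M0"
  define C where "C = 4 * M\<^sup>2 + 1"
  define \<delta> where "\<delta> = min (1 / (2 * M)) (\<epsilon> / (2 * C))"
  have M: "M \<ge> 1" "\<And>n. norm_inf (x n) \<le> M"
    using \<open>\<And>n. norm_inf (x n) \<le> M0\<close> unfolding M_def by (auto intro: order.trans[OF _ max.cobounded2])
  have C0: "C > 0" unfolding C_def by (simp add: add_nonneg_pos)
  have \<delta>: "\<delta> > 0" "\<delta> \<le> 1 / (2 * M)" unfolding \<delta>_def using \<open>\<epsilon> > 0\<close> C0 M(1) by simp_all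
  have "C * \<delta> \<le> C * (\<epsilon> / (2 * C))" unfolding \<delta>_def using C0 by (intro mult_left_mono) auto
  also have "\<dots> < \<epsilon>" using C0 \<open>\<epsilon> > 0\<close> by simp
  finally have C\<delta>: "C * \<delta> < \<epsilon>" .
  have "eventually (\<lambda>n. dist_inf (x n) (y n) < 1 + \<delta>) sequentially"
    using order_tendstoD(2)[OF assms(4), of "1 + \<delta>"] \<delta>(1) by simp
  thus "eventually (\<lambda>n. dist_inf (x n) (hyperbola_partner (y n)) < \<epsilon>) sequentially"
  proof (rule eventually_mono)
    fix n assume "dist_inf (x n) (y n) < 1 + \<delta>"
    from dist_inf_hyperbola_partner_le[OF assms(1,2) M(2) this less_imp_le[OF \<delta>(1)] \<delta>(2)] C\<delta>
    show "dist_inf (x n) (hyperbola_partner (y n)) < \<epsilon>" unfolding C_def by linarith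
  qed
next
  fix \<epsilon> :: real assume "\<epsilon> < 0"
  show "eventually (\<lambda>n. \<epsilon> < dist_inf (x n) (hyperbola_partner (y n))) sequentially"
    by (intro always_eventually allI) (meson \<open>\<epsilon> < 0\<close> dist_inf_nonneg less_le_trans)
qed

lemma BUC_prop_hyperbolas: "BUC_prop hyperbola_above shifted_hyperbola_below"
  unfolding BUC_prop_def set_dist_inf_hyperbolas
proof (intro allI impI, elim conjE)
  fix x z y :: "nat \<Rightarrow> real \<times> real"
  assume x: "\<forall>n. x n \<in> hyperbola_above" "bounded_seq_inf x" "(\<lambda>n. dist_inf (x n) (y n)) \<longlonglongrightarrow> 1"
    and z: "\<forall>n. z n \<in> hyperbola_above" "bounded_seq_inf z" "(\<lambda>n. dist_inf (z n) (y n)) \<longlonglongrightarrow> 1"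
    and y: "\<forall>n. y n \<in> shifted_hyperbola_below"
  let ?w = "\<lambda>n. hyperbola_partner (y n)"
  have "(\<lambda>n. dist_inf (x n) (?w n)) \<longlonglongrightarrow> 0" "(\<lambda>n. dist_inf (z n) (?w n)) \<longlonglongrightarrow> 0"
    using x y z by (simp_all add: tendsto_dist_inf_hyperbola_partner)
  hence upper: "(\<lambda>n. dist_inf (x n) (?w n) + dist_inf (z n) (?w n)) \<longlonglongrightarrow> 0"
    using tendsto_add by fastforce
  have triangle: "dist_inf (x n) (z n) \<le> dist_inf (x n) (?w n) + dist_inf (z n) (?w n)" for n
    using dist_inf_triangle[of "x n" "z n" "?w n"] dist_inf_commute[of "?w n" "z n"] by simp
  have "eventually (\<lambda>n. 0 \<le> dist_inf (x n) (z n)) sequentially"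
    by (simp add: dist_inf_nonneg)
  moreover have "eventually (\<lambda>n. dist_inf (x n) (z n) \<le> dist_inf (x n) (?w n) + dist_inf (z n) (?w n)) sequentially"
    using triangle by (blast intro: always_eventually)
  ultimately show "(\<lambda>n. dist_inf (x n) (z n)) \<longlonglongrightarrow> 0"
    using upper by (rule tendsto_sandwich[OF _ _ tendsto_const])
qed

lemma not_UC_prop_hyperbolas: "\<not> UC_prop hyperbola_above shifted_hyperbola_below"
proof
  define x where "x = (\<lambda>n::nat. (real (Suc n), 1 / real (Suc n)))"
  define z where "z = (\<lambda>n::nat. (real (Suc (Suc n)), 1 / real (Suc (Suc n))))"
  define y where "y = (\<lambda>n::nat. (real (Suc n), 1 / real (Suc (Suc n)) - 1))"
  have mem: "\<forall>n. x n \<in> hyperbola_above" "\<forall>n. z n \<in> hyperbola_above"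
    "\<forall>n. y n \<in> shifted_hyperbola_below"
    by (simp_all add: x_def z_def y_def mem_hyperbola_above mem_shifted_hyperbola_below)
  have inv_Suc: "(\<lambda>n. 1 / real (Suc n)) \<longlonglongrightarrow> 0"
    using LIMSEQ_inverse_real_of_nat by (simp add: inverse_eq_divide)
  have "dist_inf (x n) (y n) = 1 + (1 / real (Suc n) - 1 / real (Suc (Suc n)))" for n
  proof -
    have "1 / real (Suc (Suc n)) \<le> 1 / real (Suc n)" by (simp add: frac_le)
    thus ?thesis by (simp add: x_def y_def dist_inf_Pair)
  qed
  moreover have "(\<lambda>n. 1 + (1 / real (Suc n) - 1 / real (Suc (Suc n)))) \<longlonglongrightarrow> 1 + (0 - 0)"
    by (intro tendsto_intros inv_Suc LIMSEQ_Suc[OF inv_Suc])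
  ultimately have xy: "(\<lambda>n. dist_inf (x n) (y n)) \<longlonglongrightarrow> 1" by simp
  have zy: "(\<lambda>n. dist_inf (z n) (y n)) \<longlonglongrightarrow> 1"
    by (simp add: z_def y_def dist_inf_Pair)
  assume "UC_prop hyperbola_above shifted_hyperbola_below"
  hence xz: "(\<lambda>n. dist_inf (x n) (z n)) \<longlonglongrightarrow> 0"
    using mem xy zy unfolding UC_prop_def set_dist_inf_hyperbolas by blast
  have "\<forall>n. 1 \<le> dist_inf (x n) (z n)"
    by (simp add: x_def z_def dist_inf_Pair)
  hence "\<exists>N. \<forall>n\<ge>N. 1 \<le> dist_inf (x n) (z n)" by blast
  from LIMSEQ_le_const[OF xz this] show False by simp
qed

theorem mainTheorem16:
  fixes A B :: "(real \<times> real) set"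
  assumes "A = {(x, y). x > 0 \<and> y \<ge> 1 / x}"
      and "B = {(x, y). x > -1 \<and> y \<le> 1 / (x + 1) - 1}"
  shows "set_dist_inf A B = 1 \<and> BUC_prop A B \<and> \<not> UC_prop A B"
  using set_dist_inf_hyperbolas BUC_prop_hyperbolas not_UC_prop_hyperbolas
  unfolding assms hyperbola_above_def [symmetric] shifted_hyperbola_below_def [symmetric]
  by blast

end
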